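(* Let $U$ be a random variable on a finite alphabet $\mathcal{U}$ such that $X-Y-U$ is a Markov chain (i.e. $P_{XYU}=P_{XY}P_{U|Y}$), and for $\epsilon>0$ define $J_u=\frac{1}{\epsilon}(P_{X|U=u}-P_X)$ for each $u$ with $P_U(u)>0$, and suppose $\{J_u\}$ satisfies (P1), (P2), (P3). Then, for sufficiently small $\epsilon>0$, for every such $u$ the vector $P_{Y|U=u}$ belongs to the convex polytope $\mathbb{S}_u=\{y\in\mathbb{R}^{|\mathcal{Y}|}: My=MP_Y+\epsilon M\begin{bmatrix}P_{X|Y_1}^{-1}J_u\\0\end{bmatrix},\ y\ge0\}$.
   Context: Setting: $X,Y$ on finite alphabets with $|\mathcal{X}|<|\mathcal{Y}|$, joint pmf $P_{XY}$, marginal vectors $P_X,P_Y$ with positive entries. $P_{X|Y}\in\mathbb{R}^{|\mathcal{X}|\times|\mathcal{Y}|}$ has full row rank and $P_{X|Y}=[P_{X|Y_1},P_{X|Y_2}]$ with $P_{X|Y_1}$ (first $|\mathcal{X}|$ columns) invertible. With an SVD $P_{X|Y}=U\Sigma V^T$, $V=[v_1,\dots,v_{|\mathcal{Y}|}]$, set $M=[v_1,\dots,v_{|\mathcal{X}|}]^T$. The zero block has size $|\mathcal{Y}|-|\mathcal{X}|$. Properties: (P1) $\sum_x J_u(x)=0$ for all $u$; (P2) $\sum_u P_U(u)J_u(x)=0$ for all $x$; (P3) $\sum_x|J_u(x)|\le1$ for all $u$. *)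

theory Defs
  imports Complex_Main
begin

text \<open>Alphabets: X = {0..<n}, Y = {0..<m}, U = {0..<k}.
  A joint pmf P_XY is a function nat => nat => real; a kernel W u y = P_{U|Y}(u|y).\<close>

definition pmfXY :: "nat \<Rightarrow> nat \<Rightarrow> (nat \<Rightarrow> nat \<Rightarrow> real) \<Rightarrow> bool" where
  "pmfXY n m P \<longleftrightarrow> (\<forall>x<n. \<forall>y<m. P x y \<ge> 0) \<and> (\<Sum>x<n. \<Sum>y<m. P x y) = 1"

definition margX :: "nat \<Rightarrow> (nat \<Rightarrow> nat \<Rightarrow> real) \<Rightarrow> nat \<Rightarrow> real" where
  "margX m P x = (\<Sum>y<m. P x y)"

definition margY :: "nat \<Rightarrow> (nat \<Rightarrow> nat \<Rightarrow> real) \<Rightarrow> nat \<Rightarrow> real" where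
  "margY n P y = (\<Sum>x<n. P x y)"

definition condXY :: "nat \<Rightarrow> (nat \<Rightarrow> nat \<Rightarrow> real) \<Rightarrow> nat \<Rightarrow> nat \<Rightarrow> real" where
  "condXY n P x y = P x y / margY n P y"

definition stoch_kernel :: "nat \<Rightarrow> nat \<Rightarrow> (nat \<Rightarrow> nat \<Rightarrow> real) \<Rightarrow> bool" where
  "stoch_kernel m k W \<longleftrightarrow> (\<forall>u<k. \<forall>y<m. W u y \<ge> 0) \<and> (\<forall>y<m. (\<Sum>u<k. W u y) = 1)"

text \<open>Markov chain X - Y - U: P_XYU(x,y,u) = P_XY(x,y) * P_{U|Y}(u|y).\<close>
definition jointXYU :: "(nat \<Rightarrow> nat \<Rightarrow> real) \<Rightarrow> (nat \<Rightarrow> nat \<Rightarrow> real) \<Rightarrow> nat \<Rightarrow> nat \<Rightarrow> nat \<Rightarrow> real" where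
  "jointXYU P W x y u = P x y * W u y"

definition margU :: "nat \<Rightarrow> nat \<Rightarrow> (nat \<Rightarrow> nat \<Rightarrow> real) \<Rightarrow> (nat \<Rightarrow> nat \<Rightarrow> real) \<Rightarrow> nat \<Rightarrow> real" where
  "margU n m P W u = (\<Sum>x<n. \<Sum>y<m. jointXYU P W x y u)"

definition condXU :: "nat \<Rightarrow> nat \<Rightarrow> (nat \<Rightarrow> nat \<Rightarrow> real) \<Rightarrow> (nat \<Rightarrow> nat \<Rightarrow> real) \<Rightarrow> nat \<Rightarrow> nat \<Rightarrow> real" where
  "condXU n m P W u x = (\<Sum>y<m. jointXYU P W x y u) / margU n m P W u"

definition condYU :: "nat \<Rightarrow> nat \<Rightarrow> (nat \<Rightarrow> nat \<Rightarrow> real) \<Rightarrow> (nat \<Rightarrow> nat \<Rightarrow> real) \<Rightarrow> nat \<Rightarrow> nat \<Rightarrow> real" where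
  "condYU n m P W u y = (\<Sum>x<n. jointXYU P W x y u) / margU n m P W u"

definition Jvec :: "real \<Rightarrow> nat \<Rightarrow> nat \<Rightarrow> (nat \<Rightarrow> nat \<Rightarrow> real) \<Rightarrow> (nat \<Rightarrow> nat \<Rightarrow> real) \<Rightarrow> nat \<Rightarrow> nat \<Rightarrow> real" where
  "Jvec eps n m P W u x = (condXU n m P W u x - margX m P x) / eps"

definition is_inverse :: "nat \<Rightarrow> (nat \<Rightarrow> nat \<Rightarrow> real) \<Rightarrow> (nat \<Rightarrow> nat \<Rightarrow> real) \<Rightarrow> bool" where
  "is_inverse n A B \<longleftrightarrow>
     (\<forall>i<n. \<forall>j<n. (\<Sum>l<n. A i l * B l j) = (if i = j then 1 else 0)) \<and>
     (\<forall>i<n. \<forall>j<n. (\<Sum>l<n. B i l * A l j) = (if i = j then 1 else 0))"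

definition sq_invertible :: "nat \<Rightarrow> (nat \<Rightarrow> nat \<Rightarrow> real) \<Rightarrow> bool" where
  "sq_invertible n A \<longleftrightarrow> (\<exists>B. is_inverse n A B)"

definition sq_inv :: "nat \<Rightarrow> (nat \<Rightarrow> nat \<Rightarrow> real) \<Rightarrow> nat \<Rightarrow> nat \<Rightarrow> real" where
  "sq_inv n A = (SOME B. is_inverse n A B)"

definition full_row_rank :: "nat \<Rightarrow> nat \<Rightarrow> (nat \<Rightarrow> nat \<Rightarrow> real) \<Rightarrow> bool" where
  "full_row_rank n m A \<longleftrightarrow>
     (\<forall>c. (\<forall>y<m. (\<Sum>x<n. c x * A x y) = 0) \<longrightarrow> (\<forall>x<n. c x = 0))"

definition orthogonal_mat :: "nat \<Rightarrow> (nat \<Rightarrow> nat \<Rightarrow> real) \<Rightarrow> bool" where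
  "orthogonal_mat n Q \<longleftrightarrow>
     (\<forall>i<n. \<forall>j<n. (\<Sum>l<n. Q l i * Q l j) = (if i = j then 1 else 0)) \<and>
     (\<forall>i<n. \<forall>j<n. (\<Sum>l<n. Q i l * Q j l) = (if i = j then 1 else 0))"

text \<open>SVD A = Uo * Sigma * V^T of an n x m matrix with n \<le> m, where Sigma is the
  n x m rectangular diagonal matrix with diagonal s 0 \<ge> s 1 \<ge> ... \<ge> s (n-1) \<ge> 0.\<close>
definition is_svd :: "nat \<Rightarrow> nat \<Rightarrow> (nat \<Rightarrow> nat \<Rightarrow> real) \<Rightarrow> (nat \<Rightarrow> nat \<Rightarrow> real) \<Rightarrow>
    (nat \<Rightarrow> real) \<Rightarrow> (nat \<Rightarrow> nat \<Rightarrow> real) \<Rightarrow> bool" where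
  "is_svd n m A Uo s V \<longleftrightarrow>
     orthogonal_mat n Uo \<and> orthogonal_mat m V \<and>
     (\<forall>i<n. s i \<ge> 0) \<and> (\<forall>i j. i \<le> j \<and> j < n \<longrightarrow> s j \<le> s i) \<and>
     (\<forall>x<n. \<forall>y<m. A x y = (\<Sum>i<n. Uo x i * s i * V y i))"

text \<open>M = [v_1,...,v_n]^T : row i of M is the i-th column of V.\<close>
definition Mmat :: "(nat \<Rightarrow> nat \<Rightarrow> real) \<Rightarrow> nat \<Rightarrow> nat \<Rightarrow> real" where
  "Mmat V i y = V y i"

definition S_poly :: "nat \<Rightarrow> nat \<Rightarrow> (nat \<Rightarrow> nat \<Rightarrow> real) \<Rightarrow> (nat \<Rightarrow> nat \<Rightarrow> real) \<Rightarrow> real \<Rightarrow>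
    (nat \<Rightarrow> real) \<Rightarrow> (nat \<Rightarrow> real) set" where
  "S_poly n m P V eps J =
     (let Pinv = sq_inv n (condXY n P);
          w = (\<lambda>j. if j < n then (\<Sum>x<n. Pinv j x * J x) else 0)
      in {yv. (\<forall>i<n. (\<Sum>j<m. Mmat V i j * yv j) =
                      (\<Sum>j<m. Mmat V i j * margY n P j) + eps * (\<Sum>j<m. Mmat V i j * w j))
              \<and> (\<forall>j<m. yv j \<ge> 0)})"

end

theory Submission
  imports Defs
begin

text \<open>Since X - Y - U is a Markov chain, P_{X|Y} P_{Y|U=u} = P_{X|U=u} = P_X + eps J_u, while
  P_{X|Y} P_Y = P_X and P_{X|Y} [P_{X|Y_1}^{-1} J_u; 0] = J_u. Hence
  P_{Y|U=u} - P_Y - eps [P_{X|Y_1}^{-1} J_u; 0] lies in the null space of P_{X|Y} = U \<Sigma> M.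
  As U is orthogonal and full row rank makes every singular value nonzero, this null space is
  that of M, which is the defining equation of the polytope; nonnegativity is automatic.\<close>

lemma sum_mult_diff:
  fixes a b c d :: "nat \<Rightarrow> real"
  shows "(\<Sum>j<m. c j * (a j - b j - e * d j)) =
     (\<Sum>j<m. c j * a j) - (\<Sum>j<m. c j * b j) - e * (\<Sum>j<m. c j * d j)"
  by (simp add: right_diff_distrib sum_subtractf sum_distrib_left mult.left_commute)

lemma orthogonal_mat_transpose_mult:
  assumes "orthogonal_mat n Q" "i0 < n"
  shows "(\<Sum>x<n. Q x i0 * (\<Sum>i<n. Q x i * t i)) = t i0"
proof -
  have "(\<Sum>x<n. Q x i0 * (\<Sum>i<n. Q x i * t i)) = (\<Sum>i<n. (\<Sum>x<n. Q x i0 * Q x i) * t i)"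
    unfolding sum_distrib_left sum_distrib_right by (subst sum.swap) (simp add: ac_simps)
  also have "\<dots> = (\<Sum>i<n. (if i0 = i then 1 else 0) * t i)"
    using assms unfolding orthogonal_mat_def by (intro sum.cong) auto
  also have "\<dots> = t i0"
    using assms(2) by (simp add: if_distrib[of "\<lambda>c. c * _"] cong: if_cong)
  finally show ?thesis .
qed

lemma svd_mult_left_singular_vector:
  assumes "is_svd n m A Uo s V" "i < n" "y < m"
  shows "(\<Sum>x<n. Uo x i * A x y) = s i * V y i"
proof -
  have "(\<Sum>x<n. Uo x i * A x y) = (\<Sum>x<n. Uo x i * (\<Sum>l<n. Uo x l * (s l * V y l)))"
    using assms unfolding is_svd_def by (intro sum.cong) (auto simp: mult.assoc)
  also have "\<dots> = s i * V y i"
    using assms unfolding is_svd_def by (intro orthogonal_mat_transpose_mult) auto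
  finally show ?thesis .
qed

lemma full_row_rankD:
  assumes "full_row_rank n m A" "\<forall>y<m. (\<Sum>x<n. c x * A x y) = 0" "x < n"
  shows "c x = 0"
  using assms unfolding full_row_rank_def by simp

lemma svd_singular_value_nonzero:
  assumes "full_row_rank n m A" "is_svd n m A Uo s V" "i < n"
  shows "s i \<noteq> 0"
proof
  assume "s i = 0"
  then have "\<forall>y<m. (\<Sum>x<n. Uo x i * A x y) = 0"
    using svd_mult_left_singular_vector[OF assms(2,3)] by simp
  then have "Uo x i = 0" if "x < n" for x
    using full_row_rankD[OF assms(1), of "\<lambda>x. Uo x i"] that by simp
  moreover have "orthogonal_mat n Uo"
    using assms(2) unfolding is_svd_def by blast
  then have "(\<Sum>x<n. Uo x i * Uo x i) = 1"
    using assms(3) unfolding orthogonal_mat_def by simp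
  ultimately show False by simp
qed

lemma svd_null_space_subset:
  assumes "full_row_rank n m A" "is_svd n m A Uo s V"
    and null: "\<forall>x<n. (\<Sum>j<m. A x j * z j) = 0" and "i < n"
  shows "(\<Sum>j<m. Mmat V i j * z j) = 0"
proof -
  define t where "t = (\<lambda>i. s i * (\<Sum>j<m. V j i * z j))"
  have "(\<Sum>i<n. Uo x i * t i) = (\<Sum>j<m. A x j * z j)" if "x < n" for x
  proof -
    have "(\<Sum>i<n. Uo x i * t i) = (\<Sum>j<m. (\<Sum>i<n. Uo x i * s i * V j i) * z j)"
      unfolding t_def sum_distrib_left sum_distrib_right by (subst sum.swap) (simp add: ac_simps)
    also have "\<dots> = (\<Sum>j<m. A x j * z j)"
      using assms(2) that unfolding is_svd_def by (intro sum.cong) auto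
    finally show ?thesis .
  qed
  then have "t i = 0"
    using orthogonal_mat_transpose_mult[of n Uo i t] assms(2,4) null
    unfolding is_svd_def by simp
  then show ?thesis
    using svd_singular_value_nonzero[OF assms(1,2,4)] unfolding t_def Mmat_def by simp
qed

lemma is_inverse_mult_padded:
  assumes "is_inverse n A B" "n \<le> m" "x < n"
  shows "(\<Sum>j<m. A x j * (if j < n then \<Sum>l<n. B j l * v l else 0)) = v x"
proof -
  have "(\<Sum>j<m. A x j * (if j < n then \<Sum>l<n. B j l * v l else 0))
        = (\<Sum>j<n. \<Sum>l<n. A x j * B j l * v l)"
    using assms(2) by (subst sum.mono_neutral_right[of "{..<m}" "{..<n}"])
      (auto simp: sum_distrib_left mult.assoc)
  also have "\<dots> = (\<Sum>l<n. (\<Sum>j<n. A x j * B j l) * v l)"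
    by (subst sum.swap) (simp add: sum_distrib_right)
  also have "\<dots> = (\<Sum>l<n. (if x = l then 1 else 0) * v l)"
    using assms(1,3) unfolding is_inverse_def by (intro sum.cong) auto
  also have "\<dots> = v x"
    using assms(3) by (simp add: if_distrib[of "\<lambda>c. c * _"] cong: if_cong)
  finally show ?thesis .
qed

lemma condXY_mult_margY:
  assumes "\<forall>y<m. margY n P y > 0"
  shows "(\<Sum>j<m. condXY n P x j * margY n P j) = margX m P x"
  unfolding margX_def condXY_def using assms by (intro sum.cong) auto

lemma condXY_mult_condYU:
  assumes "\<forall>y<m. margY n P y > 0"
  shows "(\<Sum>j<m. condXY n P x j * condYU n m P W u j) = condXU n m P W u x"
proof -
  have "condXY n P x j * condYU n m P W u j = P x j * W u j / margU n m P W u"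
    if "j < m" for j
  proof -
    have "(\<Sum>x<n. P x j * W u j) = margY n P j * W u j"
      unfolding margY_def by (simp add: sum_distrib_right)
    moreover have "margY n P j > 0"
      using assms that by blast
    ultimately show ?thesis
      unfolding condXY_def condYU_def jointXYU_def by (simp add: field_simps)
  qed
  then show ?thesis
    unfolding condXU_def jointXYU_def by (simp add: sum_divide_distrib)
qed

lemma condYU_nonneg:
  assumes "pmfXY n m P" "stoch_kernel m k W" "u < k" "margU n m P W u > 0" "y < m"
  shows "condYU n m P W u y \<ge> 0"
  using assms unfolding pmfXY_def stoch_kernel_def condYU_def jointXYU_def
  by (auto intro!: divide_nonneg_pos sum_nonneg mult_nonneg_nonneg)

lemma mem_S_poly_if_solution:
  assumes "n \<le> m" "\<forall>y<m. margY n P y > 0"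
    and "full_row_rank n m (condXY n P)" "sq_invertible n (condXY n P)"
    and "is_svd n m (condXY n P) Uo s V"
    and sol: "\<forall>x<n. (\<Sum>j<m. condXY n P x j * yv j) = margX m P x + eps * J x"
    and "\<forall>j<m. yv j \<ge> 0"
  shows "yv \<in> S_poly n m P V eps J"
proof -
  define w where "w = (\<lambda>j. if j < n then \<Sum>x<n. sq_inv n (condXY n P) j x * J x else 0)"
  have "is_inverse n (condXY n P) (sq_inv n (condXY n P))"
    using assms(4) unfolding sq_invertible_def sq_inv_def by (rule someI_ex)
  then have w: "(\<Sum>j<m. condXY n P x j * w j) = J x" if "x < n" for x
    unfolding w_def using is_inverse_mult_padded assms(1) that by blast
  have "\<forall>x<n. (\<Sum>j<m. condXY n P x j * (yv j - margY n P j - eps * w j)) = 0"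
    unfolding sum_mult_diff using sol w condXY_mult_margY[OF assms(2)] by simp
  then have "(\<Sum>j<m. Mmat V i j * (yv j - margY n P j - eps * w j)) = 0" if "i < n" for i
    by (rule svd_null_space_subset[OF assms(3,5) _ that])
  then have "\<forall>i<n. (\<Sum>j<m. Mmat V i j * yv j)
      = (\<Sum>j<m. Mmat V i j * margY n P j) + eps * (\<Sum>j<m. Mmat V i j * w j)"
    unfolding sum_mult_diff by (simp add: algebra_simps)
  then show ?thesis
    using assms(7) unfolding S_poly_def Let_def w_def by blast
qed

theorem lemma2:
  fixes n m :: nat and P :: "nat \<Rightarrow> nat \<Rightarrow> real"
    and Uo V :: "nat \<Rightarrow> nat \<Rightarrow> real" and s :: "nat \<Rightarrow> real"
  assumes "n < m"
    and "pmfXY n m P"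
    and "\<forall>x<n. margX m P x > 0"
    and "\<forall>y<m. margY n P y > 0"
    and "full_row_rank n m (condXY n P)"
    and "sq_invertible n (condXY n P)"
    and "is_svd n m (condXY n P) Uo s V"
  shows "\<exists>eps0>0. \<forall>eps. 0 < eps \<and> eps < eps0 \<longrightarrow>
     (\<forall>(k::nat) W. stoch_kernel m k W \<longrightarrow>
        (\<forall>u<k. margU n m P W u > 0 \<longrightarrow> (\<Sum>x<n. Jvec eps n m P W u x) = 0) \<longrightarrow>
        (\<forall>x<n. (\<Sum>u | u < k \<and> margU n m P W u > 0. margU n m P W u * Jvec eps n m P W u x) = 0) \<longrightarrow>
        (\<forall>u<k. margU n m P W u > 0 \<longrightarrow> (\<Sum>x<n. \<bar>Jvec eps n m P W u x\<bar>) \<le> 1) \<longrightarrow>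
        (\<forall>u<k. margU n m P W u > 0 \<longrightarrow>
           condYU n m P W u \<in> S_poly n m P V eps (Jvec eps n m P W u)))"
proof (intro exI[of _ 1] conjI allI impI)
  fix eps :: real and k :: nat and W u
  assume eps: "0 < eps \<and> eps < 1" and W: "stoch_kernel m k W"
    and u: "u < k" "margU n m P W u > 0"
  have "(\<Sum>j<m. condXY n P x j * condYU n m P W u j)
          = margX m P x + eps * Jvec eps n m P W u x" for x
    using condXY_mult_condYU[OF assms(4)] eps unfolding Jvec_def by simp
  moreover have "condYU n m P W u j \<ge> 0" if "j < m" for j
    using condYU_nonneg[OF assms(2) W u that] .
  ultimately show "condYU n m P W u \<in> S_poly n m P V eps (Jvec eps n m P W u)"
    using mem_S_poly_if_solution[OF less_imp_le[OF assms(1)] assms(4-7)] by blast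
qed simp

end
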